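(* Let $s\geq 1$, let $q$ be a prime power and let $C^{(1)},\ldots,C^{(s)}\in\mathbb{F}_q^{\mathbb{N}\times\mathbb{N}_0}$ be finite-row generating matrices. Let $(s_n)_{n\geq 0}$ be a sequence of $q$-adic integers that is uniformly distributed in $\mathbb{Z}_q$. Suppose that the matrices $C^{(1)},\ldots,C^{(s)}$ generate a uniformly distributed sequence in $[0,1]^s$ via Algorithm 1 (for some admissible choice of the bijections). Then, for every choice of bijections $\psi_r$ ($r\geq 0$) and $\lambda_{i,j}$, Algorithm 2 applied with these matrices and the input sequence $(s_n)_{n\geq 0}$ produces a uniformly distributed sequence in $[0,1]^s$.
   Context: $\mathbb{F}_q$ is the finite field with $q$ elements, $D_q=\{0,1,\ldots,q-1\}$. $\mathbb{Z}_q$ is the ring of $q$-adic integers; every $z\in\mathbb{Z}_q$ has a unique representation $z=\sum_{r\geq 0}a_rq^r$ with $a_r\in D_q$ (for nonnegative integers this is the base-$q$ expansion), and $\tau_k(z)=\sum_{r=0}^{k-1}a_rq^r$. A sequence $(x_n)_{n\ge0}$ in $\mathbb{Z}_q$ is uniformly distributed in $\mathbb{Z}_q$ if for every $k\geq 1$ and every $0\leq a<q^k$, $\lim_{N\to\infty}\frac1N\#\{0\le n<N:\tau_k(x_n)\equiv a \pmod{q^k}\}=q^{-k}$. A generating matrix $C^{(i)}=(c^{(i)}_{j,r})_{j\geq1,r\geq0}$ over $\mathbb{F}_q$ is finite-row if each row has only finitely many nonzero entries. Algorithm 2: choose bijections $\psi_r:D_q\to\mathbb{F}_q$ ($r\ge0$),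 finite-row matrices $C^{(1)},\dots,C^{(s)}$, bijections $\lambda_{i,j}:\mathbb{F}_q\to D_q$ ($1\le i\le s$, $j\ge1$), and a sequence $(s_n)_{n\ge0}$ in $\mathbb{Z}_q$. Writing $s_n=\sum_{r\ge0}a_rq^r$, set $x_n^{(i)}=\sum_{j\ge1}\lambda_{i,j}\big(\sum_{r\ge0}c^{(i)}_{j,r}\psi_r(a_r)\big)q^{-j}$ and $\boldsymbol{x}_n=(x_n^{(1)},\ldots,x_n^{(s)})\in[0,1]^s$. Algorithm 1 is the same construction with $s_n=n$ for all $n$ and with the bijections $\psi_r$ required to satisfy $\psi_r(0)=0$ for all sufficiently large $r$. The star discrepancy of points $\boldsymbol{x}_0,\dots,\boldsymbol{x}_{N-1}\in[0,1]^s$ is $\sup_J|A(J)/N-\mathrm{vol}(J)|$, the supremum over subintervals $J\subseteq[0,1]^s$ with one vertex at the origin, $A(J)$ the number of $n<N$ with $\boldsymbol{x}_n\in J$; a sequence is uniformly distributed if the star discrepancy of its first $N$ terms tends to $0$ as $N\to\infty$. *)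

theory Defs
  imports "HOL-Analysis.Analysis"
begin

text \<open>The finite field F_q is a type 'f of class {field, finite}; q = CARD('f).
  D_q = {..<q}. A q-adic integer is represented by its digit sequence
  a :: nat => nat with a r < q for all r.\<close>

definition qadic_digits :: "nat \<Rightarrow> (nat \<Rightarrow> nat) \<Rightarrow> bool" where
  "qadic_digits q a \<longleftrightarrow> (\<forall>r. a r < q)"

definition tau :: "nat \<Rightarrow> nat \<Rightarrow> (nat \<Rightarrow> nat) \<Rightarrow> nat" where
  "tau q k a = (\<Sum>r<k. a r * q ^ r)"

definition ud_qadic :: "nat \<Rightarrow> (nat \<Rightarrow> nat \<Rightarrow> nat) \<Rightarrow> bool" where
  "ud_qadic q sn \<longleftrightarrow>
     (\<forall>k\<ge>1. \<forall>a<q ^ k.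
        (\<lambda>N. real (card {n. n < N \<and> tau q k (sn n) mod q ^ k = a mod q ^ k}) / real N)
          \<longlonglongrightarrow> 1 / real q ^ k)"

definition nat_digits :: "nat \<Rightarrow> nat \<Rightarrow> nat \<Rightarrow> nat" where
  "nat_digits q n r = n div q ^ r mod q"

text \<open>Generating matrices: C i j r for component i < s (0-based), row j >= 1, column r >= 0.\<close>
definition finite_row :: "(nat \<Rightarrow> nat \<Rightarrow> 'f::zero) \<Rightarrow> bool" where
  "finite_row M \<longleftrightarrow> (\<forall>j\<ge>1. finite {r. M j r \<noteq> 0})"

text \<open>The i-th coordinate of the point generated (Algorithm 1/2) from the input
  q-adic integer with digit sequence a.\<close>
definition gen_coord ::
  "(nat \<Rightarrow> nat \<Rightarrow> nat \<Rightarrow> 'f::{field,finite}) \<Rightarrow> (nat \<Rightarrow> nat \<Rightarrow> 'f)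
    \<Rightarrow> (nat \<Rightarrow> nat \<Rightarrow> 'f \<Rightarrow> nat) \<Rightarrow> (nat \<Rightarrow> nat) \<Rightarrow> nat \<Rightarrow> real" where
  "gen_coord C psi lam a i =
     (\<Sum>j. real (lam i (Suc j) (\<Sum>r\<in>{r. C i (Suc j) r \<noteq> 0}. C i (Suc j) r * psi r (a r)))
            / real CARD('f) ^ Suc j)"

definition star_discrepancy :: "nat \<Rightarrow> (nat \<Rightarrow> nat \<Rightarrow> real) \<Rightarrow> nat \<Rightarrow> real" where
  "star_discrepancy s x N =
     (SUP t\<in>{t. \<forall>i<s. 0 \<le> t i \<and> t i \<le> 1}.
        \<bar>real (card {n. n < N \<and> (\<forall>i<s. 0 \<le> x n i \<and> x n i < t i)}) / real N
          - (\<Prod>i<s. t i)\<bar>)"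

definition ud_cube :: "nat \<Rightarrow> (nat \<Rightarrow> nat \<Rightarrow> real) \<Rightarrow> bool" where
  "ud_cube s x \<longleftrightarrow> (\<lambda>N. star_discrepancy s x N) \<longlonglongrightarrow> 0"

end

theory Submission
  imports Defs
begin

text \<open>Fix a resolution \<open>m\<close> and let \<open>L\<close> bound the supports of the first \<open>m\<close> rows of all \<open>C\<^sup>(\<^sup>i\<^sup>)\<close>.
  The cell of mesh \<open>q\<^sup>-\<^sup>m\<close> containing the point generated from the input digits \<open>a\<close> is
  determined, injectively through the bijections \<open>\<lambda>\<close>, by the values of these rows at the vector
  \<open>(\<psi>\<^sub>r(a\<^sub>r))\<^sub>r\<^sub><\<^sub>L\<close>. Because Algorithm 1 yields a uniformly distributed sequence, every cell is
  visited, so these rows define a surjective linear map \<open>\<bbbF>\<^sub>q\<^sup>L \<rightarrow> \<bbbF>\<^sub>q\<^sup>s\<^sup>m\<close> and each cell corresponds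
  to a fibre, i.e. to exactly \<open>q\<^sup>L\<^sup>-\<^sup>s\<^sup>m\<close> residues modulo \<open>q\<^sup>L\<close>. Uniform distribution of \<open>(s\<^sub>n)\<close> in
  \<open>\<int>\<^sub>q\<close> makes each residue occur with frequency \<open>q\<^sup>-\<^sup>L\<close>, hence each cell with frequency
  \<open>q\<^sup>-\<^sup>s\<^sup>m\<close>, and equidistribution of the cells at every resolution forces the star discrepancy
  to zero.\<close>

section \<open>Digit expansions\<close>

primrec leading_digits :: "nat \<Rightarrow> nat \<Rightarrow> (nat \<Rightarrow> nat) \<Rightarrow> nat" where
  "leading_digits q 0 d = 0"
| "leading_digits q (Suc m) d = q * leading_digits q m d + d m"

lemma leading_digits_cong:
  "(\<And>j. j < m \<Longrightarrow> d j = d' j) \<Longrightarrow> leading_digits q m d = leading_digits q m d'"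
  by (induction m) auto

lemma leading_digits_less:
  assumes "\<And>j. j < m \<Longrightarrow> d j < q"
  shows "leading_digits q m d < q ^ m"
  using assms
proof (induction m)
  case (Suc m)
  then have "leading_digits q m d + 1 \<le> q ^ m" by simp
  then have "q * leading_digits q m d + q \<le> q * q ^ m"
    by (metis add_mult_distrib2 mult.right_neutral mult_le_mono2)
  then show ?case using Suc.prems[of m] by simp
qed simp

lemma leading_digits_eq_iff:
  assumes "\<And>j. j < m \<Longrightarrow> d j < q" "\<And>j. j < m \<Longrightarrow> d' j < q"
  shows "leading_digits q m d = leading_digits q m d' \<longleftrightarrow> (\<forall>j<m. d j = d' j)"
  using assms
proof (induction m)
  case (Suc m)
  have "leading_digits q (Suc m) d = leading_digits q (Suc m) d'
      \<longleftrightarrow> leading_digits q m d = leading_digits q m d' \<and> d m = d' m"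
  proof
    assume eq: "leading_digits q (Suc m) d = leading_digits q (Suc m) d'"
    then have "(q * leading_digits q m d + d m) mod q = (q * leading_digits q m d' + d' m) mod q"
      by simp
    then have "d m = d' m" using Suc.prems[of m] by simp
    with eq show "leading_digits q m d = leading_digits q m d' \<and> d m = d' m"
      using Suc.prems[of m] by simp
  qed simp
  then show ?case using Suc by (auto simp: less_Suc_eq)
qed simp

lemma leading_digits_surj:
  assumes "0 < q" "p < q ^ m"
  shows "\<exists>d. (\<forall>j<m. d j < q) \<and> leading_digits q m d = p"
  using assms(2)
proof (induction m arbitrary: p)
  case (Suc m)
  have "p div q < q ^ m"
    using Suc.prems by (simp add: less_mult_imp_div_less mult.commute)
  then obtain d where d: "\<forall>j<m. d j < q" "leading_digits q m d = p div q"
    using Suc.IH by blast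
  have "leading_digits q m (d(m := p mod q)) = leading_digits q m d"
    by (rule leading_digits_cong) simp
  then have "leading_digits q (Suc m) (d(m := p mod q)) = p"
    using d by simp
  moreover have "\<forall>j<Suc m. (d(m := p mod q)) j < q"
    using d assms(1) by (simp add: less_Suc_eq)
  ultimately show ?case by blast
qed simp

lemma leading_digits_div_power:
  assumes "0 < q"
  shows "real (leading_digits q m d) / real q ^ m = (\<Sum>j<m. real (d j) / real q ^ Suc j)"
proof (induction m)
  case (Suc m)
  have "real (leading_digits q (Suc m) d) / real q ^ Suc m
      = real (leading_digits q m d) / real q ^ m + real (d m) / real q ^ Suc m"
    using assms by (simp add: field_simps)
  then show ?case using Suc by simp
qed simp

lemma summable_digit_expansion:
  assumes q: "q \<ge> 2" and d: "\<And>j. d j < q"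
  shows "summable (\<lambda>j. real (d j) / real q ^ Suc j)"
proof (rule summable_comparison_test[OF _ summable_geometric[of "1 / real q"]])
  show "\<exists>N. \<forall>j\<ge>N. norm (real (d j) / real q ^ Suc j) \<le> (1 / real q) ^ j"
  proof (intro exI allI impI)
    fix j
    have "real (d j) \<le> real q" using d[of j] by simp
    then show "norm (real (d j) / real q ^ Suc j) \<le> (1 / real q) ^ j"
      using q by (simp add: divide_le_eq power_divide)
  qed
qed (use q in simp)

lemma suminf_digit_tail_le:
  assumes q: "q \<ge> 2" and d: "\<And>j. d j < q"
  shows "(\<Sum>j. real (d (j + m)) / real q ^ Suc (j + m)) \<le> 1 / real q ^ m"
proof -
  let ?g = "\<lambda>j. (real q - 1) / real q * (1 / real q) ^ j"
  have g_summable: "summable ?g" using q by (intro summable_mult summable_geometric) simp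
  have "real (d j) / real q ^ Suc j \<le> ?g j" for j
  proof -
    have "real (d j) \<le> real q - 1" using d[of j] by linarith
    then have "real (d j) / real q ^ Suc j \<le> (real q - 1) / real q ^ Suc j"
      using q by (simp add: divide_right_mono)
    also have "\<dots> = ?g j" by (simp add: power_divide field_simps)
    finally show ?thesis .
  qed
  then have "(\<Sum>j. real (d (j + m)) / real q ^ Suc (j + m)) \<le> (\<Sum>j. ?g (j + m))"
    by (intro suminf_le summable_ignore_initial_segment summable_digit_expansion q d g_summable)
  also have "\<dots> = (real q - 1) / real q * (1 / real q) ^ m * (\<Sum>j. (1 / real q) ^ j)"
    by (subst suminf_mult[symmetric])
      (use q in \<open>auto intro: summable_geometric simp: power_add mult_ac\<close>)
  also have "(\<Sum>j. (1 / real q) ^ j) = 1 / (1 - 1 / real q)"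
    by (rule suminf_geometric) (use q in simp)
  also have "(real q - 1) / real q * (1 / real q) ^ m * (1 / (1 - 1 / real q)) = 1 / real q ^ m"
    using q by (simp add: field_simps)
  finally show ?thesis .
qed

lemma suminf_digits_bounds:
  fixes d :: "nat \<Rightarrow> nat"
  assumes q: "q \<ge> 2" and d: "\<And>j. d j < q"
  defines "x \<equiv> (\<Sum>j. real (d j) / real q ^ Suc j)"
  shows "real (leading_digits q m d) / real q ^ m \<le> x"
    and "x \<le> (real (leading_digits q m d) + 1) / real q ^ m"
proof -
  have "x = (\<Sum>j. real (d (j + m)) / real q ^ Suc (j + m)) + (\<Sum>j<m. real (d j) / real q ^ Suc j)"
    unfolding x_def by (rule suminf_split_initial_segment[OF summable_digit_expansion[OF q d]])
  moreover have "(\<Sum>j<m. real (d j) / real q ^ Suc j) = real (leading_digits q m d) / real q ^ m"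
    using q by (simp add: leading_digits_div_power)
  moreover have "0 \<le> (\<Sum>j. real (d (j + m)) / real q ^ Suc (j + m))"
    by (intro suminf_nonneg summable_ignore_initial_segment summable_digit_expansion q d) simp
  ultimately show "real (leading_digits q m d) / real q ^ m \<le> x"
    and "x \<le> (real (leading_digits q m d) + 1) / real q ^ m"
    using suminf_digit_tail_le[OF q d, where m = m] by (simp_all add: add_divide_distrib)
qed

lemma tau_Suc: "tau q (Suc L) d = d 0 + q * tau q L (\<lambda>r. d (Suc r))"
  unfolding tau_def sum.lessThan_Suc_shift by (simp add: sum_distrib_left algebra_simps)

lemma nat_digits_Suc: "nat_digits q a (Suc r) = nat_digits q (a div q) r"
  unfolding nat_digits_def by (simp add: div_mult2_eq)

lemma tau_less:
  assumes "\<And>r. r < L \<Longrightarrow> d r < q"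
  shows "tau q L d < q ^ L"
  using assms
proof (induction L arbitrary: d)
  case (Suc L)
  have "tau q L (\<lambda>r. d (Suc r)) + 1 \<le> q ^ L" using Suc by (simp add: Suc_le_eq)
  then have "q + q * tau q L (\<lambda>r. d (Suc r)) \<le> q * q ^ L"
    by (metis add.commute add_mult_distrib2 mult.right_neutral mult_le_mono2)
  then show ?case using Suc.prems[of 0] by (simp add: tau_Suc)
qed (simp add: tau_def)

lemma nat_digits_tau:
  assumes "\<And>r. r < L \<Longrightarrow> d r < q" "r < L"
  shows "nat_digits q (tau q L d) r = d r"
  using assms
proof (induction L arbitrary: d r)
  case (Suc L)
  have "d 0 < q" using Suc.prems by simp
  then have div_eq: "(d 0 + q * tau q L (\<lambda>r. d (Suc r))) div q = tau q L (\<lambda>r. d (Suc r))"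
    by simp
  show ?case
  proof (cases r)
    case 0
    then show ?thesis using \<open>d 0 < q\<close> by (simp add: tau_Suc nat_digits_def)
  next
    case (Suc r')
    then show ?thesis
      using Suc.IH[of "\<lambda>r. d (Suc r)" r'] Suc.prems div_eq by (simp add: tau_Suc nat_digits_Suc)
  qed
qed simp

lemma tau_nat_digits:
  assumes "0 < q" "a < q ^ L"
  shows "tau q L (nat_digits q a) = a"
  using assms(2)
proof (induction L arbitrary: a)
  case (Suc L)
  have "a div q < q ^ L"
    using Suc.prems by (simp add: less_mult_imp_div_less mult.commute)
  then have "tau q L (nat_digits q (a div q)) = a div q" by (rule Suc.IH)
  then show ?case by (simp only: tau_Suc nat_digits_Suc) (simp add: nat_digits_def)
qed (simp add: tau_def)

section \<open>Frequencies and the star discrepancy\<close>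

definition freq :: "(nat \<Rightarrow> bool) \<Rightarrow> nat \<Rightarrow> real" where
  "freq P N = real (card {n. n < N \<and> P n}) / real N"

lemma freq_nonneg: "0 \<le> freq P N"
  by (simp add: freq_def)

lemma freq_le_1: "freq P N \<le> 1"
proof (cases "N = 0")
  case False
  have "card {n. n < N \<and> P n} \<le> card {..<N}" by (rule card_mono) auto
  then show ?thesis using False by (simp add: freq_def)
qed (simp add: freq_def)

lemma freq_mono: "(\<And>n. P n \<Longrightarrow> Q n) \<Longrightarrow> freq P N \<le> freq Q N"
  unfolding freq_def by (intro divide_right_mono of_nat_mono card_mono) auto

lemma freq_eq_sum_of_bool: "freq P N = (\<Sum>n<N. of_bool (P n)) / real N"
proof -
  have "{n. n < N \<and> P n} = {..<N} \<inter> {n. P n}" by auto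
  then show ?thesis
    unfolding freq_def using sum_of_bool_eq[OF finite_lessThan[of N], of P] by simp
qed

lemma card_eq_sum_card_fibres:
  assumes "finite A" "finite B" "f ` A \<subseteq> B"
  shows "card A = (\<Sum>b\<in>B. card {a\<in>A. f a = b})"
proof -
  have "A = (\<Union>b\<in>B. {a\<in>A. f a = b})" using assms(3) by auto
  also have "card \<dots> = (\<Sum>b\<in>B. card {a\<in>A. f a = b})"
    by (rule card_UN_disjoint) (use assms(1,2) in auto)
  finally show ?thesis .
qed

lemma freq_mem_eq_sum:
  assumes "finite B"
  shows "freq (\<lambda>n. f n \<in> B) N = (\<Sum>b\<in>B. freq (\<lambda>n. f n = b) N)"
proof -
  have "card {n. n < N \<and> f n \<in> B} = (\<Sum>b\<in>B. card {n \<in> {n. n < N \<and> f n \<in> B}. f n = b})"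
    by (rule card_eq_sum_card_fibres) (use assms in auto)
  also have "\<dots> = (\<Sum>b\<in>B. card {n. n < N \<and> f n = b})"
    by (rule sum.cong) (auto intro: arg_cong[where f = card])
  finally show ?thesis by (simp add: freq_def sum_divide_distrib)
qed

lemma tendsto_freq_mem:
  assumes "finite B" "\<And>b. b \<in> B \<Longrightarrow> (\<lambda>N. freq (\<lambda>n. f n = b) N) \<longlonglongrightarrow> c"
  shows "(\<lambda>N. freq (\<lambda>n. f n \<in> B) N) \<longlonglongrightarrow> real (card B) * c"
  unfolding freq_mem_eq_sum[OF assms(1)] using tendsto_sum[of B, OF assms(2)] by simp

abbreviation anchored_freq :: "nat \<Rightarrow> (nat \<Rightarrow> nat \<Rightarrow> real) \<Rightarrow> (nat \<Rightarrow> real) \<Rightarrow> nat \<Rightarrow> real" where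
  "anchored_freq s x t \<equiv> freq (\<lambda>n. \<forall>i<s. 0 \<le> x n i \<and> x n i < t i)"

lemma star_discrepancy_eq:
  "star_discrepancy s x N
     = (SUP t\<in>{t. \<forall>i<s. 0 \<le> t i \<and> t i \<le> 1}. \<bar>anchored_freq s x t N - (\<Prod>i<s. t i)\<bar>)"
  by (simp add: star_discrepancy_def freq_def)

lemma anchored_freq_error_le_star_discrepancy:
  assumes "\<forall>i<s. 0 \<le> t i \<and> t i \<le> 1"
  shows "\<bar>anchored_freq s x t N - (\<Prod>i<s. t i)\<bar> \<le> star_discrepancy s x N"
  unfolding star_discrepancy_eq
proof (rule cSUP_upper)
  show "t \<in> {t. \<forall>i<s. 0 \<le> t i \<and> t i \<le> 1}" using assms by simp
  have "\<bar>anchored_freq s x t N - (\<Prod>i<s. t i)\<bar> \<le> 2" if "\<forall>i<s. 0 \<le> t i \<and> t i \<le> 1" for t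
  proof -
    have "0 \<le> (\<Prod>i<s. t i)" "(\<Prod>i<s. t i) \<le> 1"
      using that by (auto intro: prod_nonneg prod_le_1)
    then show ?thesis using freq_le_1 freq_nonneg by (smt (verit))
  qed
  then show "bdd_above ((\<lambda>t. \<bar>anchored_freq s x t N - (\<Prod>i<s. t i)\<bar>) ` {t. \<forall>i<s. 0 \<le> t i \<and> t i \<le> 1})"
    by (intro bdd_aboveI2) auto
qed

lemma star_discrepancy_le:
  assumes "\<And>t. \<forall>i<s. 0 \<le> t i \<and> t i \<le> 1 \<Longrightarrow> \<bar>anchored_freq s x t N - (\<Prod>i<s. t i)\<bar> \<le> e"
  shows "star_discrepancy s x N \<le> e"
  unfolding star_discrepancy_eq
  by (rule cSUP_least) (use assms in \<open>auto intro!: exI[of _ "\<lambda>_. 0"]\<close>)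

lemma star_discrepancy_nonneg: "0 \<le> star_discrepancy s x N"
  using anchored_freq_error_le_star_discrepancy[of s "\<lambda>_. 0" x N] by simp

lemma tendsto_anchored_freq:
  assumes "ud_cube s x" "\<forall>i<s. 0 \<le> t i \<and> t i \<le> 1"
  shows "(\<lambda>N. anchored_freq s x t N) \<longlonglongrightarrow> (\<Prod>i<s. t i)"
proof -
  have "(\<lambda>N. anchored_freq s x t N - (\<Prod>i<s. t i)) \<longlonglongrightarrow> 0"
  proof (rule Lim_null_comparison)
    show "\<forall>\<^sub>F N in sequentially. norm (anchored_freq s x t N - (\<Prod>i<s. t i)) \<le> star_discrepancy s x N"
      using anchored_freq_error_le_star_discrepancy[OF assms(2)] by simp
    show "(\<lambda>N. star_discrepancy s x N) \<longlonglongrightarrow> 0" using assms(1) by (simp add: ud_cube_def)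
  qed
  then show ?thesis by (simp add: LIM_zero_iff)
qed

lemma prod_diff_le_sum_abs_diff:
  fixes a b :: "'i \<Rightarrow> real"
  assumes "\<And>i. i \<in> A \<Longrightarrow> 0 \<le> a i \<and> a i \<le> 1" "\<And>i. i \<in> A \<Longrightarrow> 0 \<le> b i \<and> b i \<le> 1"
  shows "\<bar>(\<Prod>i\<in>A. a i) - (\<Prod>i\<in>A. b i)\<bar> \<le> (\<Sum>i\<in>A. \<bar>a i - b i\<bar>)"
  using assms
proof (induction A rule: infinite_finite_induct)
  case (insert x F)
  let ?A = "\<Prod>i\<in>F. a i" and ?B = "\<Prod>i\<in>F. b i"
  have A01: "0 \<le> ?A" "?A \<le> 1" using insert by (auto intro: prod_nonneg prod_le_1)
  have bx: "0 \<le> b x" "b x \<le> 1" using insert by auto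
  have "a x * ?A - b x * ?B = (a x - b x) * ?A + b x * (?A - ?B)" by algebra
  then have "\<bar>a x * ?A - b x * ?B\<bar> \<le> \<bar>a x - b x\<bar> * ?A + b x * \<bar>?A - ?B\<bar>"
    using A01 bx by (simp add: abs_mult abs_triangle_ineq[THEN order_trans])
  also have "\<dots> \<le> \<bar>a x - b x\<bar> + \<bar>?A - ?B\<bar>"
    using A01 bx by (intro add_mono mult_left_le mult_left_le_one_le) auto
  finally show ?case using insert by simp
qed simp_all

lemma prod_of_bool: "finite A \<Longrightarrow> (\<Prod>i\<in>A. of_bool (P i) :: 'a::comm_semiring_1) = of_bool (\<forall>i\<in>A. P i)"
  by (induction A rule: finite_induct) auto

lemma prod_diff_expand:
  fixes u v :: "'i \<Rightarrow> 'a::comm_ring_1"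
  assumes "finite A"
  shows "(\<Prod>i\<in>A. v i - u i) = (\<Sum>X\<in>Pow A. (-1) ^ card X * (\<Prod>i\<in>A. if i \<in> X then u i else v i))"
proof -
  have "(\<Prod>i\<in>A. v i - u i) = (\<Sum>X\<in>Pow A. (\<Prod>i\<in>X. - u i) * (\<Prod>i\<in>A - X. v i))"
    using prod_add[OF assms, of "\<lambda>i. - u i" v] by simp
  also have "\<dots> = (\<Sum>X\<in>Pow A. (-1) ^ card X * (\<Prod>i\<in>A. if i \<in> X then u i else v i))"
  proof (rule sum.cong[OF refl])
    fix X assume "X \<in> Pow A"
    then have "A \<inter> {i. i \<in> X} = X" "A \<inter> - {i. i \<in> X} = A - X" by auto
    then show "(\<Prod>i\<in>X. - u i) * (\<Prod>i\<in>A - X. v i)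
        = (-1) ^ card X * (\<Prod>i\<in>A. if i \<in> X then u i else v i)"
      by (simp add: prod.If_cases[OF assms] prod_uminus)
  qed
  finally show ?thesis .
qed

text \<open>Inclusion-exclusion over the lower corners of the box.\<close>
lemma tendsto_box_freq:
  assumes ud: "ud_cube s x" and ab: "\<forall>i<s. 0 \<le> a i \<and> a i \<le> b i \<and> b i \<le> 1"
  shows "(\<lambda>N. freq (\<lambda>n. \<forall>i<s. a i \<le> x n i \<and> x n i < b i) N) \<longlonglongrightarrow> (\<Prod>i<s. b i - a i)"
proof -
  define corner where "corner X i = (if i \<in> X then a i else b i)" for X i
  have indicator_box: "of_bool (\<forall>i<s. a i \<le> x n i \<and> x n i < b i)
      = (\<Sum>X\<in>Pow {..<s}. (-1) ^ card X * of_bool (\<forall>i<s. 0 \<le> x n i \<and> x n i < corner X i) :: real)"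
    for n
  proof -
    have "(\<Prod>i<s. of_bool (0 \<le> x n i \<and> x n i < b i) - of_bool (0 \<le> x n i \<and> x n i < a i) :: real)
        = (\<Prod>i<s. of_bool (a i \<le> x n i \<and> x n i < b i))"
      using ab by (intro prod.cong) auto
    then have "of_bool (\<forall>i<s. a i \<le> x n i \<and> x n i < b i)
        = (\<Prod>i<s. of_bool (0 \<le> x n i \<and> x n i < b i) - of_bool (0 \<le> x n i \<and> x n i < a i) :: real)"
      by (simp add: prod_of_bool Ball_def)
    also have "\<dots> = (\<Sum>X\<in>Pow {..<s}. (-1) ^ card X * (\<Prod>i<s. of_bool (0 \<le> x n i \<and> x n i < corner X i)))"
      by (subst prod_diff_expand) (auto simp: corner_def if_distrib intro!: sum.cong prod.cong)
    finally show ?thesis by (simp add: prod_of_bool Ball_def)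
  qed
  have freq_box: "freq (\<lambda>n. \<forall>i<s. a i \<le> x n i \<and> x n i < b i) N
      = (\<Sum>X\<in>Pow {..<s}. (-1) ^ card X * anchored_freq s x (corner X) N)" for N
    unfolding freq_eq_sum_of_bool indicator_box
    by (subst sum.swap) (simp add: sum_distrib_left sum_divide_distrib mult.commute)
  have "(\<Prod>i<s. b i - a i) = (\<Sum>X\<in>Pow {..<s}. (-1) ^ card X * (\<Prod>i<s. corner X i))"
    unfolding corner_def by (rule prod_diff_expand) simp
  moreover have "(\<lambda>N. \<Sum>X\<in>Pow {..<s}. (-1) ^ card X * anchored_freq s x (corner X) N)
      \<longlonglongrightarrow> (\<Sum>X\<in>Pow {..<s}. (-1) ^ card X * (\<Prod>i<s. corner X i))"
    using ab by (intro tendsto_sum tendsto_mult_left tendsto_anchored_freq[OF ud])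
      (auto simp: corner_def)
  ultimately show ?thesis unfolding freq_box by simp
qed

section \<open>Grid cells and uniform distribution\<close>

lemma prod_grid_rounding_error:
  fixes k :: "nat \<Rightarrow> nat" and t :: "nat \<Rightarrow> real"
  assumes "0 < h" and "\<forall>i<s. 0 \<le> t i \<and> t i \<le> 1"
    and "\<And>i. i < s \<Longrightarrow> k i \<le> h" "\<And>i. i < s \<Longrightarrow> \<bar>real (k i) - t i * real h\<bar> \<le> 1"
  shows "\<bar>(\<Prod>i<s. real (k i) / real h) - (\<Prod>i<s. t i)\<bar> \<le> real s / real h"
proof -
  have "\<bar>(\<Prod>i<s. real (k i) / real h) - (\<Prod>i<s. t i)\<bar> \<le> (\<Sum>i<s. \<bar>real (k i) / real h - t i\<bar>)"
    using assms by (intro prod_diff_le_sum_abs_diff) auto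
  also have "\<dots> \<le> (\<Sum>i<s. 1 / real h)"
  proof (rule sum_mono)
    fix i assume "i \<in> {..<s}"
    then have "\<bar>real (k i) - t i * real h\<bar> / real h \<le> 1 / real h"
      using assms by (intro divide_right_mono) auto
    moreover have "real (k i) / real h - t i = (real (k i) - t i * real h) / real h"
      using assms(1) by (simp add: field_simps)
    ultimately show "\<bar>real (k i) / real h - t i\<bar> \<le> 1 / real h"
      by (simp add: abs_divide)
  qed
  finally show ?thesis by simp
qed

lemma tendsto_freq_cells_below:
  fixes cell :: "nat \<Rightarrow> nat \<Rightarrow> nat"
  assumes cell_freq: "\<And>P. P \<in> PiE {..<s} (\<lambda>_. {..<h}) \<Longrightarrow>
      (\<lambda>N. freq (\<lambda>n. \<forall>i<s. cell n i = P i) N) \<longlonglongrightarrow> 1 / real h ^ s"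
    and k: "\<And>i. i < s \<Longrightarrow> k i \<le> h"
  shows "(\<lambda>N. freq (\<lambda>n. \<forall>i<s. cell n i < k i) N) \<longlonglongrightarrow> (\<Prod>i<s. real (k i) / real h)"
proof -
  let ?B = "PiE {..<s} (\<lambda>i. {..<k i})"
  have "(\<lambda>N. freq (\<lambda>n. restrict (cell n) {..<s} \<in> ?B) N) \<longlonglongrightarrow> real (card ?B) * (1 / real h ^ s)"
  proof (rule tendsto_freq_mem)
    fix P assume P: "P \<in> ?B"
    then have "P i < h" if "i < s" for i
      using that k[OF that] unfolding PiE_iff by (meson lessThan_iff less_le_trans)
    with P have "P \<in> PiE {..<s} (\<lambda>_. {..<h})" by (auto simp: PiE_iff)
    moreover have "restrict (cell n) {..<s} = P \<longleftrightarrow> (\<forall>i<s. cell n i = P i)" for n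
      using P by (auto simp: PiE_iff extensional_def fun_eq_iff)
    ultimately show "(\<lambda>N. freq (\<lambda>n. restrict (cell n) {..<s} = P) N) \<longlonglongrightarrow> 1 / real h ^ s"
      using cell_freq by simp
  qed (simp add: finite_PiE)
  moreover have "restrict (cell n) {..<s} \<in> ?B \<longleftrightarrow> (\<forall>i<s. cell n i < k i)" for n
    by auto
  moreover have "real (card ?B) * (1 / real h ^ s) = (\<Prod>i<s. real (k i) / real h)"
    by (simp add: card_PiE prod_dividef)
  ultimately show ?thesis by simp
qed

lemma nat_ceiling_grid_bounds:
  assumes "0 < h" "0 \<le> t" "t \<le> 1"
  shows "t * real h \<le> real (nat \<lceil>t * real h\<rceil>)" "real (nat \<lceil>t * real h\<rceil>) < t * real h + 1"
    "nat \<lceil>t * real h\<rceil> \<le> h"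
proof -
  have "0 \<le> t * real h" "t * real h \<le> real h"
    using assms by (auto simp: mult_left_le_one_le)
  then show "t * real h \<le> real (nat \<lceil>t * real h\<rceil>)" "real (nat \<lceil>t * real h\<rceil>) < t * real h + 1"
    "nat \<lceil>t * real h\<rceil> \<le> h"
    using ceiling_correct[of "t * real h"] by (auto simp: ceiling_le_iff nat_le_iff)
qed

text \<open>The lower grid box is one cell smaller because the cell bounds on \<open>x\<close> are closed.\<close>
lemma anchored_freq_between_grid_boxes:
  fixes x :: "nat \<Rightarrow> nat \<Rightarrow> real" and cell :: "nat \<Rightarrow> nat \<Rightarrow> nat"
  assumes h: "0 < h" and t: "\<forall>i<s. 0 \<le> t i \<and> t i \<le> 1"
    and cell: "\<And>n i. i < s \<Longrightarrow> real (cell n i) / real h \<le> x n i \<and> x n i \<le> (real (cell n i) + 1) / real h"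
  shows "freq (\<lambda>n. \<forall>i<s. cell n i < nat \<lceil>t i * real h\<rceil> - 1) N \<le> anchored_freq s x t N"
    and "anchored_freq s x t N \<le> freq (\<lambda>n. \<forall>i<s. cell n i < nat \<lceil>t i * real h\<rceil>) N"
proof -
  note ceil = nat_ceiling_grid_bounds[OF h]
  show "freq (\<lambda>n. \<forall>i<s. cell n i < nat \<lceil>t i * real h\<rceil> - 1) N \<le> anchored_freq s x t N"
  proof (rule freq_mono, intro allI impI)
    fix n i assume below: "\<forall>i<s. cell n i < nat \<lceil>t i * real h\<rceil> - 1" and i: "i < s"
    then have "real (cell n i) + 1 < t i * real h"
      using ceil[of "t i"] t by fastforce
    then have "(real (cell n i) + 1) / real h < t i" using h by (simp add: field_simps)
    then show "0 \<le> x n i \<and> x n i < t i"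
      using cell[OF i, of n] by (auto intro: order_trans[rotated])
  qed
  show "anchored_freq s x t N \<le> freq (\<lambda>n. \<forall>i<s. cell n i < nat \<lceil>t i * real h\<rceil>) N"
  proof (rule freq_mono, intro allI impI)
    fix n i assume inside: "\<forall>i<s. 0 \<le> x n i \<and> x n i < t i" and i: "i < s"
    then have "real (cell n i) / real h < t i"
      using cell[OF i, of n] by force
    then have "real (cell n i) < t i * real h"
      using h by (simp add: pos_divide_less_eq)
    then show "cell n i < nat \<lceil>t i * real h\<rceil>" using ceil(1)[of "t i"] t i by linarith
  qed
qed

lemma star_discrepancy_le_grid:
  fixes x :: "nat \<Rightarrow> nat \<Rightarrow> real" and cell :: "nat \<Rightarrow> nat \<Rightarrow> nat"
  assumes h: "0 < h"
    and cell: "\<And>n i. i < s \<Longrightarrow> real (cell n i) / real h \<le> x n i \<and> x n i \<le> (real (cell n i) + 1) / real h"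
    and err: "\<And>k. k \<in> PiE {..<s} (\<lambda>_. {..h}) \<Longrightarrow>
      \<bar>freq (\<lambda>n. \<forall>i<s. cell n i < k i) N - (\<Prod>i<s. real (k i) / real h)\<bar> \<le> \<delta>"
  shows "star_discrepancy s x N \<le> \<delta> + real s / real h"
proof (rule star_discrepancy_le)
  fix t :: "nat \<Rightarrow> real" assume t: "\<forall>i<s. 0 \<le> t i \<and> t i \<le> 1"
  define up where "up = (\<lambda>i\<in>{..<s}. nat \<lceil>t i * real h\<rceil>)"
  define lo where "lo = (\<lambda>i\<in>{..<s}. nat \<lceil>t i * real h\<rceil> - 1)"
  have up: "\<bar>real (up i) - t i * real h\<bar> \<le> 1" "up i \<le> h" if "i < s" for i
    using nat_ceiling_grid_bounds[OF h, of "t i"] t that by (auto simp: up_def)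
  have lo: "\<bar>real (lo i) - t i * real h\<bar> \<le> 1" "lo i \<le> h" if "i < s" for i
  proof -
    have "real (lo i) = (if nat \<lceil>t i * real h\<rceil> = 0 then 0 else real (nat \<lceil>t i * real h\<rceil>) - 1)"
      using that by (cases "nat \<lceil>t i * real h\<rceil>") (simp_all add: lo_def)
    moreover have "0 \<le> t i * real h" using t that by simp
    ultimately show "\<bar>real (lo i) - t i * real h\<bar> \<le> 1" "lo i \<le> h"
      using nat_ceiling_grid_bounds[OF h, of "t i"] t that by (auto simp: lo_def)
  qed
  have "up \<in> PiE {..<s} (\<lambda>_. {..h})" "lo \<in> PiE {..<s} (\<lambda>_. {..h})"
    using up(2) lo(2) by (auto simp: up_def lo_def)
  note err_up = err[OF this(1)] and err_lo = err[OF this(2)]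
  have "\<bar>(\<Prod>i<s. real (up i) / real h) - (\<Prod>i<s. t i)\<bar> \<le> real s / real h"
    "\<bar>(\<Prod>i<s. real (lo i) / real h) - (\<Prod>i<s. t i)\<bar> \<le> real s / real h"
    using up lo by (intro prod_grid_rounding_error[OF h t]; blast)+
  moreover have "freq (\<lambda>n. \<forall>i<s. cell n i < lo i) N \<le> anchored_freq s x t N"
    "anchored_freq s x t N \<le> freq (\<lambda>n. \<forall>i<s. cell n i < up i) N"
    using anchored_freq_between_grid_boxes[OF h t cell] by (simp_all add: up_def lo_def)
  ultimately show "\<bar>anchored_freq s x t N - (\<Prod>i<s. t i)\<bar> \<le> \<delta> + real s / real h"
    using err_up err_lo by linarith
qed

lemma eventually_star_discrepancy_le_grid:
  fixes x :: "nat \<Rightarrow> nat \<Rightarrow> real" and cell :: "nat \<Rightarrow> nat \<Rightarrow> nat"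
  assumes h: "0 < h"
    and cell: "\<And>n i. i < s \<Longrightarrow> real (cell n i) / real h \<le> x n i \<and> x n i \<le> (real (cell n i) + 1) / real h"
    and cell_freq: "\<And>P. P \<in> PiE {..<s} (\<lambda>_. {..<h}) \<Longrightarrow>
      (\<lambda>N. freq (\<lambda>n. \<forall>i<s. cell n i = P i) N) \<longlonglongrightarrow> 1 / real h ^ s"
    and \<delta>: "\<delta> > 0"
  shows "\<forall>\<^sub>F N in sequentially. star_discrepancy s x N \<le> \<delta> + real s / real h"
proof -
  have "\<forall>\<^sub>F N in sequentially. \<forall>k\<in>PiE {..<s} (\<lambda>_. {..h}).
      dist (freq (\<lambda>n. \<forall>i<s. cell n i < k i) N) (\<Prod>i<s. real (k i) / real h) < \<delta>"
    using \<delta> by (intro eventually_ball_finite finite_PiE ballI tendstoD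
        tendsto_freq_cells_below[OF cell_freq]) auto
  then show ?thesis
  proof (rule eventually_mono)
    fix N assume "\<forall>k\<in>PiE {..<s} (\<lambda>_. {..h}).
      dist (freq (\<lambda>n. \<forall>i<s. cell n i < k i) N) (\<Prod>i<s. real (k i) / real h) < \<delta>"
    then show "star_discrepancy s x N \<le> \<delta> + real s / real h"
      by (intro star_discrepancy_le_grid[OF h cell]) (auto simp: dist_real_def less_imp_le)
  qed
qed

lemma ud_cube_if_grid_cells_equidistributed:
  fixes x :: "nat \<Rightarrow> nat \<Rightarrow> real" and cell :: "nat \<Rightarrow> nat \<Rightarrow> nat \<Rightarrow> nat"
  assumes q: "q \<ge> 2"
    and cell: "\<And>m n i. i < s \<Longrightarrow>
      real (cell m n i) / real q ^ m \<le> x n i \<and> x n i \<le> (real (cell m n i) + 1) / real q ^ m"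
    and cell_freq: "\<And>m P. P \<in> PiE {..<s} (\<lambda>_. {..<q ^ m}) \<Longrightarrow>
      (\<lambda>N. freq (\<lambda>n. \<forall>i<s. cell m n i = P i) N) \<longlonglongrightarrow> 1 / real (q ^ m) ^ s"
  shows "ud_cube s x"
  unfolding ud_cube_def
proof (rule LIMSEQ_I)
  fix \<epsilon> :: real assume \<epsilon>: "\<epsilon> > 0"
  have "1 < real q" using q by simp
  then obtain m where m: "4 * real s / \<epsilon> < real q ^ m"
    using real_arch_pow by blast
  define e where "e = \<epsilon> / 4 + real s / real (q ^ m)"
  have "real s / real (q ^ m) \<le> \<epsilon> / 4"
    using m \<epsilon> q by (simp add: field_simps)
  then have "e < \<epsilon>"
    using \<epsilon> unfolding e_def by linarith
  moreover have "\<forall>\<^sub>F N in sequentially. star_discrepancy s x N \<le> e"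
    unfolding e_def
    by (rule eventually_star_discrepancy_le_grid) (use q cell cell_freq \<epsilon> in auto)
  ultimately have "\<forall>\<^sub>F N in sequentially. norm (star_discrepancy s x N - 0) < \<epsilon>"
    using star_discrepancy_nonneg[of s x] by (auto elim: eventually_mono)
  then show "\<exists>N0. \<forall>N\<ge>N0. norm (star_discrepancy s x N - 0) < \<epsilon>"
    by (simp only: eventually_sequentially)
qed

lemma ud_cube_visits_every_cell:
  fixes x :: "nat \<Rightarrow> nat \<Rightarrow> real" and cell :: "nat \<Rightarrow> nat \<Rightarrow> nat"
  assumes ud: "ud_cube s x" and h: "0 < h"
    and cell: "\<And>n i. i < s \<Longrightarrow> real (cell n i) / real h \<le> x n i \<and> x n i \<le> (real (cell n i) + 1) / real h"
    and P: "\<And>i. i < s \<Longrightarrow> P i < h"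
  shows "\<exists>n. \<forall>i<s. cell n i = P i"
proof (rule ccontr)
  assume never: "\<nexists>n. \<forall>i<s. cell n i = P i"
  define a where "a i = (real (P i) + 1 / 3) / real h" for i
  define b where "b i = (real (P i) + 2 / 3) / real h" for i
  have ab: "\<forall>i<s. 0 \<le> a i \<and> a i \<le> b i \<and> b i \<le> 1"
  proof (intro allI impI conjI)
    fix i assume "i < s"
    then have "real (P i + 1) \<le> real h" using P by (simp only: of_nat_le_iff) (simp add: Suc_le_eq)
    then show "0 \<le> a i" "a i \<le> b i" "b i \<le> 1"
      using h by (auto simp: a_def b_def divide_right_mono)
  qed
  \<comment> \<open>A point in the inner third of the cell \<open>P\<close> lies in no other closed cell.\<close>
  have "\<not> (\<forall>i<s. a i \<le> x n i \<and> x n i < b i)" for n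
  proof
    assume inner: "\<forall>i<s. a i \<le> x n i \<and> x n i < b i"
    have "cell n i = P i" if i: "i < s" for i
    proof -
      have "(real (P i) + 1 / 3) / real h \<le> (real (cell n i) + 1) / real h"
        "real (cell n i) / real h < (real (P i) + 2 / 3) / real h"
        using inner cell[OF i, of n] i by (auto simp: a_def b_def)
      then have "real (P i) + 1 / 3 \<le> real (cell n i) + 1" "real (cell n i) < real (P i) + 2 / 3"
        using h by (simp_all add: divide_le_cancel divide_less_cancel)
      then show ?thesis by linarith
    qed
    with never show False by blast
  qed
  then have "freq (\<lambda>n. \<forall>i<s. a i \<le> x n i \<and> x n i < b i) N = 0" for N
    by (simp add: freq_def)
  then have "(\<lambda>N. freq (\<lambda>n. \<forall>i<s. a i \<le> x n i \<and> x n i < b i) N) \<longlonglongrightarrow> 0"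
    by simp
  moreover have "(\<lambda>N. freq (\<lambda>n. \<forall>i<s. a i \<le> x n i \<and> x n i < b i) N) \<longlonglongrightarrow> (\<Prod>i<s. b i - a i)"
    by (rule tendsto_box_freq[OF ud ab])
  ultimately have "(\<Prod>i<s. b i - a i) = 0"
    using LIMSEQ_unique by blast
  moreover have "(\<Prod>i<s. b i - a i) > 0"
    using h by (intro prod_pos) (simp add: a_def b_def divide_strict_right_mono)
  ultimately show False by linarith
qed

section \<open>Digits of the generated points\<close>

definition row_value ::
  "(nat \<Rightarrow> nat \<Rightarrow> nat \<Rightarrow> 'f::{field,finite}) \<Rightarrow> (nat \<Rightarrow> nat \<Rightarrow> 'f) \<Rightarrow> (nat \<Rightarrow> nat) \<Rightarrow> nat \<Rightarrow> nat \<Rightarrow> 'f"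
  where "row_value C psi a i j = (\<Sum>r\<in>{r. C i j r \<noteq> 0}. C i j r * psi r (a r))"

text \<open>Digit \<open>j\<close> (counted from 0) of the \<open>i\<close>-th coordinate; it comes from row \<open>j + 1\<close> of \<open>C i\<close>.\<close>
definition point_digit ::
  "(nat \<Rightarrow> nat \<Rightarrow> nat \<Rightarrow> 'f::{field,finite}) \<Rightarrow> (nat \<Rightarrow> nat \<Rightarrow> 'f) \<Rightarrow> (nat \<Rightarrow> nat \<Rightarrow> 'f \<Rightarrow> nat)
    \<Rightarrow> (nat \<Rightarrow> nat) \<Rightarrow> nat \<Rightarrow> nat \<Rightarrow> nat"
  where "point_digit C psi lam a i j = lam i (Suc j) (row_value C psi a i (Suc j))"

definition grid_cell ::
  "(nat \<Rightarrow> nat \<Rightarrow> nat \<Rightarrow> 'f::{field,finite}) \<Rightarrow> (nat \<Rightarrow> nat \<Rightarrow> 'f) \<Rightarrow> (nat \<Rightarrow> nat \<Rightarrow> 'f \<Rightarrow> nat)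
    \<Rightarrow> nat \<Rightarrow> (nat \<Rightarrow> nat) \<Rightarrow> nat \<Rightarrow> nat"
  where "grid_cell C psi lam m a i = leading_digits CARD('f) m (point_digit C psi lam a i)"

lemma card_field_ge_2: "CARD('f::{field,finite}) \<ge> 2"
proof -
  have "card {0::'f, 1} \<le> CARD('f)" by (rule card_mono) auto
  then show ?thesis by simp
qed

lemma point_digit_less:
  fixes C :: "nat \<Rightarrow> nat \<Rightarrow> nat \<Rightarrow> 'f::{field,finite}"
  assumes "bij_betw (lam i (Suc j)) (UNIV :: 'f set) {..<CARD('f)}"
  shows "point_digit C psi lam a i j < CARD('f)"
  using bij_betw_apply[OF assms] by (simp add: point_digit_def)

lemma gen_coord_in_grid_cell:
  fixes C :: "nat \<Rightarrow> nat \<Rightarrow> nat \<Rightarrow> 'f::{field,finite}"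
  assumes "\<forall>j\<ge>1. bij_betw (lam i j) (UNIV :: 'f set) {..<CARD('f)}"
  shows "real (grid_cell C psi lam m a i) / real CARD('f) ^ m \<le> gen_coord C psi lam a i
      \<and> gen_coord C psi lam a i \<le> (real (grid_cell C psi lam m a i) + 1) / real CARD('f) ^ m"
proof -
  have digits: "point_digit C psi lam a i j < CARD('f)" for j
    by (rule point_digit_less) (use assms in simp)
  have "gen_coord C psi lam a i
      = (\<Sum>j. real (point_digit C psi lam a i j) / real CARD('f) ^ Suc j)"
    by (simp add: gen_coord_def point_digit_def row_value_def)
  then show ?thesis
    unfolding grid_cell_def
    using suminf_digits_bounds[OF card_field_ge_2 digits] by simp
qed

lemma row_value_eq_sum_lessThan:
  assumes "{r. C i j r \<noteq> 0} \<subseteq> {..<L}"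
  shows "row_value C psi a i j = (\<Sum>r<L. C i j r * psi r (a r))"
  unfolding row_value_def by (rule sum.mono_neutral_left) (use assms in auto)

lemma grid_cell_eq_iff:
  fixes C :: "nat \<Rightarrow> nat \<Rightarrow> nat \<Rightarrow> 'f::{field,finite}"
  assumes lam: "\<forall>j\<ge>1. bij_betw (lam i j) (UNIV :: 'f set) {..<CARD('f)}"
  shows "grid_cell C psi lam m a i = leading_digits CARD('f) m (\<lambda>j. lam i (Suc j) (w j))
     \<longleftrightarrow> (\<forall>j<m. row_value C psi a i (Suc j) = w j)"
proof -
  have lam_Suc: "bij_betw (lam i (Suc j)) (UNIV :: 'f set) {..<CARD('f)}" for j
    using lam by simp
  have "lam i (Suc j) y < CARD('f)" for j y using bij_betw_apply[OF lam_Suc] by simp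
  moreover have "point_digit C psi lam a i j < CARD('f)" for j
    by (rule point_digit_less) (rule lam_Suc)
  moreover have "inj (lam i (Suc j))" for j using lam_Suc bij_betw_imp_inj_on by blast
  ultimately show ?thesis
    unfolding grid_cell_def
    by (simp add: leading_digits_eq_iff point_digit_def inj_eq)
qed

lemma ex_row_values_for_cell:
  fixes lam :: "nat \<Rightarrow> nat \<Rightarrow> 'f::{field,finite} \<Rightarrow> nat"
  assumes lam: "\<forall>j\<ge>1. bij_betw (lam i j) (UNIV :: 'f set) {..<CARD('f)}"
    and p: "p < CARD('f) ^ m"
  shows "\<exists>w. leading_digits CARD('f) m (\<lambda>j. lam i (Suc j) (w j)) = p"
proof -
  obtain d where d: "\<forall>j<m. d j < CARD('f)" "leading_digits CARD('f) m d = p"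
    using leading_digits_surj[OF _ p] by auto
  have "lam i (Suc j) (inv (lam i (Suc j)) (d j)) = d j" if "j < m" for j
  proof -
    have "bij_betw (lam i (Suc j)) (UNIV :: 'f set) {..<CARD('f)}" using lam by simp
    then show ?thesis
      using d(1) that bij_betw_imp_surj_on by (fastforce intro: f_inv_into_f)
  qed
  then have "leading_digits CARD('f) m (\<lambda>j. lam i (Suc j) (inv (lam i (Suc j)) (d j)))
      = leading_digits CARD('f) m d"
    by (rule leading_digits_cong)
  then show ?thesis
    using d(2) by (intro exI[where x = "\<lambda>j. inv (lam i (Suc j)) (d j)"]) simp
qed

lemma ex_row_values_for_cells:
  fixes lam :: "nat \<Rightarrow> nat \<Rightarrow> 'f::{field,finite} \<Rightarrow> nat"
  assumes lam: "\<forall>i<s. \<forall>j\<ge>1. bij_betw (lam i j) (UNIV :: 'f set) {..<CARD('f)}"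
    and P: "P \<in> PiE {..<s} (\<lambda>_. {..<CARD('f) ^ m})"
  shows "\<exists>w. \<forall>i<s. leading_digits CARD('f) m (\<lambda>j. lam i (Suc j) (w (i, j))) = P i"
proof -
  define W where "W i = (SOME wi. leading_digits CARD('f) m (\<lambda>j. lam i (Suc j) (wi j)) = P i)" for i
  have "leading_digits CARD('f) m (\<lambda>j. lam i (Suc j) (W i j)) = P i" if "i < s" for i
  proof -
    have "\<forall>j\<ge>1. bij_betw (lam i j) (UNIV :: 'f set) {..<CARD('f)}" "P i < CARD('f) ^ m"
      using lam P that by auto
    then have "\<exists>wi. leading_digits CARD('f) m (\<lambda>j. lam i (Suc j) (wi j)) = P i"
      by (rule ex_row_values_for_cell)
    then show ?thesis unfolding W_def by (rule someI_ex)
  qed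
  then show ?thesis by (intro exI[where x = "\<lambda>(i, j). W i j"]) simp
qed

lemma grid_cells_eq_iff_row_values:
  fixes C :: "nat \<Rightarrow> nat \<Rightarrow> nat \<Rightarrow> 'f::{field,finite}"
  assumes lam: "\<forall>i<s. \<forall>j\<ge>1. bij_betw (lam i j) (UNIV :: 'f set) {..<CARD('f)}"
    and support: "\<forall>i<s. \<forall>j<m. {r. C i (Suc j) r \<noteq> 0} \<subseteq> {..<L}"
    and w: "\<And>i. i < s \<Longrightarrow> leading_digits CARD('f) m (\<lambda>j. lam i (Suc j) (w (i, j))) = P i"
  shows "(\<forall>i<s. grid_cell C psi lam m a i = P i)
    \<longleftrightarrow> (\<forall>(i, j)\<in>{..<s} \<times> {..<m}. (\<Sum>r<L. C i (Suc j) r * psi r (a r)) = w (i, j))"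
proof -
  have "grid_cell C psi lam m a i = P i
      \<longleftrightarrow> (\<forall>j<m. (\<Sum>r<L. C i (Suc j) r * psi r (a r)) = w (i, j))" if i: "i < s" for i
  proof -
    have "\<forall>j\<ge>1. bij_betw (lam i j) (UNIV :: 'f set) {..<CARD('f)}" using lam i by simp
    from grid_cell_eq_iff[where lam = lam and i = i, OF this] have "grid_cell C psi lam m a i = P i
        \<longleftrightarrow> (\<forall>j<m. row_value C psi a i (Suc j) = w (i, j))"
      unfolding w[OF i, symmetric] .
    moreover have "row_value C psi a i (Suc j) = (\<Sum>r<L. C i (Suc j) r * psi r (a r))" if "j < m" for j
      using support i that by (intro row_value_eq_sum_lessThan) simp
    ultimately show ?thesis by simp
  qed
  then show ?thesis by auto
qed

text \<open>If the rows were not onto, some grid cell of mesh \<open>q\<^sup>-\<^sup>m\<close> would never be visited.\<close>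
lemma rows_surj_if_ud_cube:
  fixes C :: "nat \<Rightarrow> nat \<Rightarrow> nat \<Rightarrow> 'f::{field,finite}"
  assumes lam: "\<forall>i<s. \<forall>j\<ge>1. bij_betw (lam i j) (UNIV :: 'f set) {..<CARD('f)}"
    and ud: "ud_cube s (\<lambda>n i. gen_coord C psi lam (A n) i)"
    and support: "\<forall>i<s. \<forall>j<m. {r. C i (Suc j) r \<noteq> 0} \<subseteq> {..<L}"
  shows "\<exists>v. \<forall>(i, j)\<in>{..<s} \<times> {..<m}. (\<Sum>r<L. C i (Suc j) r * v r) = w (i, j)"
proof -
  have lam_less: "lam i (Suc j) y < CARD('f)" if "i < s" for i j y
  proof -
    have "bij_betw (lam i (Suc j)) (UNIV :: 'f set) {..<CARD('f)}" using lam that by simp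
    then show ?thesis using bij_betw_apply by fastforce
  qed
  define P where "P i = leading_digits CARD('f) m (\<lambda>j. lam i (Suc j) (w (i, j)))" for i
  have "\<exists>n. \<forall>i<s. grid_cell C psi lam m (A n) i = P i"
  proof (rule ud_cube_visits_every_cell[OF ud])
    show "0 < CARD('f) ^ m" by simp
    show "P i < CARD('f) ^ m" if "i < s" for i
      unfolding P_def by (rule leading_digits_less) (rule lam_less[OF that])
    show "real (grid_cell C psi lam m (A n) i) / real (CARD('f) ^ m) \<le> gen_coord C psi lam (A n) i
      \<and> gen_coord C psi lam (A n) i \<le> (real (grid_cell C psi lam m (A n) i) + 1) / real (CARD('f) ^ m)"
      if "i < s" for n i
      using lam that by (simp add: gen_coord_in_grid_cell)
  qed
  then obtain n where "\<forall>i<s. grid_cell C psi lam m (A n) i = P i" ..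
  then have "\<forall>(i, j)\<in>{..<s} \<times> {..<m}. (\<Sum>r<L. C i (Suc j) r * psi r (A n r)) = w (i, j)"
    using grid_cells_eq_iff_row_values[OF lam support, of w P psi "A n"] by (simp add: P_def)
  then show ?thesis by (intro exI[where x = "\<lambda>r. psi r (A n r)"])

qed

section \<open>Frequencies of the grid cells\<close>

lemma card_linear_fibre_eq_kernel:
  fixes M :: "'k \<Rightarrow> nat \<Rightarrow> 'f::{field,finite}"
  assumes "\<exists>v. \<forall>k\<in>K. (\<Sum>r<L. M k r * v r) = w k"
  shows "card {v \<in> PiE {..<L} (\<lambda>_. UNIV). \<forall>k\<in>K. (\<Sum>r<L. M k r * v r) = w k}
    = card {v \<in> PiE {..<L} (\<lambda>_. UNIV). \<forall>k\<in>K. (\<Sum>r<L. M k r * v r) = 0}"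
    (is "card ?F = card ?Ker")
proof -
  obtain v where v: "\<forall>k\<in>K. (\<Sum>r<L. M k r * v r) = w k" using assms by blast
  define v0 where "v0 = restrict v {..<L}"
  have v0: "(\<Sum>r<L. M k r * v0 r) = w k" if "k \<in> K" for k
    using v that by (simp add: v0_def)
  have "bij_betw (\<lambda>v. \<lambda>r\<in>{..<L}. v r - v0 r) ?F ?Ker"
  proof (rule bij_betw_byWitness[where f' = "\<lambda>u. \<lambda>r\<in>{..<L}. u r + v0 r"])
    show "\<forall>v\<in>?F. (\<lambda>r\<in>{..<L}. (\<lambda>r\<in>{..<L}. v r - v0 r) r + v0 r) = v"
      by (auto simp: PiE_def extensional_def fun_eq_iff)
    show "\<forall>u\<in>?Ker. (\<lambda>r\<in>{..<L}. (\<lambda>r\<in>{..<L}. u r + v0 r) r - v0 r) = u"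
      by (auto simp: PiE_def extensional_def fun_eq_iff)
    show "(\<lambda>v. \<lambda>r\<in>{..<L}. v r - v0 r) ` ?F \<subseteq> ?Ker"
      using v0 by (auto simp: right_diff_distrib sum_subtractf)
    show "(\<lambda>u. \<lambda>r\<in>{..<L}. u r + v0 r) ` ?Ker \<subseteq> ?F"
      using v0 by (auto simp: distrib_left sum.distrib)
  qed
  then show ?thesis by (rule bij_betw_same_card)
qed

lemma card_linear_fibre:
  fixes M :: "'k \<Rightarrow> nat \<Rightarrow> 'f::{field,finite}"
  assumes K: "finite K" and surj: "\<And>w. \<exists>v. \<forall>k\<in>K. (\<Sum>r<L. M k r * v r) = w k"
  shows "card {v \<in> PiE {..<L} (\<lambda>_. UNIV). \<forall>k\<in>K. (\<Sum>r<L. M k r * v r) = w k} * CARD('f) ^ card K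
    = CARD('f) ^ L"
proof -
  let ?V = "PiE {..<L} (\<lambda>_. UNIV :: 'f set)" and ?W = "PiE K (\<lambda>_. UNIV :: 'f set)"
  let ?kernel = "{v \<in> ?V. \<forall>k\<in>K. (\<Sum>r<L. M k r * v r) = 0}"
  have "card ?V = (\<Sum>w\<in>?W. card {v \<in> ?V. restrict (\<lambda>k. \<Sum>r<L. M k r * v r) K = w})"
    using K by (intro card_eq_sum_card_fibres) (auto simp: finite_PiE)
  also have "\<dots> = (\<Sum>w\<in>?W. card ?kernel)"
  proof (rule sum.cong[OF refl])
    fix w assume "w \<in> ?W"
    then have "{v \<in> ?V. restrict (\<lambda>k. \<Sum>r<L. M k r * v r) K = w}
        = {v \<in> ?V. \<forall>k\<in>K. (\<Sum>r<L. M k r * v r) = w k}"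
      by (auto simp: PiE_def extensional_def fun_eq_iff)
    then show "card {v \<in> ?V. restrict (\<lambda>k. \<Sum>r<L. M k r * v r) K = w} = card ?kernel"
      using card_linear_fibre_eq_kernel[OF surj] by simp
  qed
  finally have "CARD('f) ^ L = CARD('f) ^ card K * card ?kernel"
    using K by (simp add: card_PiE)
  then show ?thesis using card_linear_fibre_eq_kernel[OF surj, of w] by simp
qed

lemma tendsto_freq_tau_mem:
  assumes ud: "ud_qadic q sn" and "L \<ge> 1" and G: "G \<subseteq> {..<q ^ L}"
    and digits: "\<forall>n. qadic_digits q (sn n)"
  shows "(\<lambda>N. freq (\<lambda>n. tau q L (sn n) \<in> G) N) \<longlonglongrightarrow> real (card G) / real q ^ L"
proof -
  have "(\<lambda>N. freq (\<lambda>n. tau q L (sn n) \<in> G) N) \<longlonglongrightarrow> real (card G) * (1 / real q ^ L)"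
  proof (rule tendsto_freq_mem)
    show "finite G" using G finite_subset by blast
    fix a assume "a \<in> G"
    then have "a < q ^ L" using G by blast
    moreover have "tau q L (sn n) < q ^ L" for n
      using digits by (intro tau_less) (simp add: qadic_digits_def)
    ultimately have "tau q L (sn n) mod q ^ L = a mod q ^ L \<longleftrightarrow> tau q L (sn n) = a" for n
      by simp
    moreover have "(\<lambda>N. real (card {n. n < N \<and> tau q L (sn n) mod q ^ L = a mod q ^ L}) / real N)
        \<longlonglongrightarrow> 1 / real q ^ L"
      using ud \<open>L \<ge> 1\<close> \<open>a < q ^ L\<close> unfolding ud_qadic_def by blast
    ultimately show "(\<lambda>N. freq (\<lambda>n. tau q L (sn n) = a) N) \<longlonglongrightarrow> 1 / real q ^ L"
      by (simp add: freq_def)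
  qed
  then show ?thesis by simp
qed

lemma inj_on_digit_vector:
  assumes psi: "\<forall>r. inj_on (psi r) {..<q}" and q: "0 < q"
  shows "inj_on (\<lambda>a. \<lambda>r\<in>{..<L}. psi r (nat_digits q a r)) {..<q ^ L}"
proof (rule inj_onI)
  fix a a' assume a: "a \<in> {..<q ^ L}" "a' \<in> {..<q ^ L}"
    and eq: "(\<lambda>r\<in>{..<L}. psi r (nat_digits q a r)) = (\<lambda>r\<in>{..<L}. psi r (nat_digits q a' r))"
  have "nat_digits q a r = nat_digits q a' r" if "r < L" for r
  proof (rule inj_onD[OF psi[rule_format]])
    show "psi r (nat_digits q a r) = psi r (nat_digits q a' r)"
      using fun_cong[OF eq, of r] that by simp
    show "nat_digits q a r \<in> {..<q}" "nat_digits q a' r \<in> {..<q}"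
      using q by (simp_all add: nat_digits_def)
  qed
  then have "tau q L (nat_digits q a) = tau q L (nat_digits q a')"
    unfolding tau_def by (intro sum.cong) auto
  then show "a = a'" using a tau_nat_digits[OF q] by simp
qed

lemma digit_vector_image:
  fixes psi :: "nat \<Rightarrow> nat \<Rightarrow> 'f"
  assumes psi: "\<forall>r. psi r ` {..<q} = UNIV"
  shows "(\<lambda>a. \<lambda>r\<in>{..<L}. psi r (nat_digits q a r)) ` {..<q ^ L} = PiE {..<L} (\<lambda>_. UNIV)"
proof
  show "PiE {..<L} (\<lambda>_. UNIV) \<subseteq> (\<lambda>a. \<lambda>r\<in>{..<L}. psi r (nat_digits q a r)) ` {..<q ^ L}"
  proof
    fix v assume v: "v \<in> PiE {..<L} (\<lambda>_. UNIV :: 'f set)"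
    define d where "d r = inv_into {..<q} (psi r) (v r)" for r
    have v_range: "v r \<in> psi r ` {..<q}" for r
      using psi by simp
    have d: "d r < q" "psi r (d r) = v r" for r
      using inv_into_into[OF v_range] f_inv_into_f[OF v_range] by (simp_all add: d_def)
    have "(\<lambda>r\<in>{..<L}. psi r (nat_digits q (tau q L d) r)) = v"
    proof
      fix r show "(\<lambda>r\<in>{..<L}. psi r (nat_digits q (tau q L d) r)) r = v r"
        using nat_digits_tau[of L d q r] d PiE_arb[OF v, of r] by (cases "r < L") simp_all
    qed
    moreover have "tau q L d < q ^ L" using d(1) by (rule tau_less)
    ultimately show "v \<in> (\<lambda>a. \<lambda>r\<in>{..<L}. psi r (nat_digits q a r)) ` {..<q ^ L}"
      by (intro image_eqI[where x = "tau q L d"]) simp_all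
  qed
qed (intro image_subsetI; simp)

lemma bij_betw_digit_vector:
  fixes psi :: "nat \<Rightarrow> nat \<Rightarrow> 'f"
  assumes psi: "\<forall>r. bij_betw (psi r) {..<q} (UNIV :: 'f set)"
  shows "bij_betw (\<lambda>a. \<lambda>r\<in>{..<L}. psi r (nat_digits q a r)) {..<q ^ L} (PiE {..<L} (\<lambda>_. UNIV))"
proof (rule bij_betw_imageI)
  have onto: "\<forall>r. psi r ` {..<q} = UNIV" using psi bij_betw_imp_surj_on by blast
  then have "0 < q" by (cases q) auto
  then show "inj_on (\<lambda>a. \<lambda>r\<in>{..<L}. psi r (nat_digits q a r)) {..<q ^ L}"
    using psi by (intro inj_on_digit_vector) (auto intro: bij_betw_imp_inj_on)
  show "(\<lambda>a. \<lambda>r\<in>{..<L}. psi r (nat_digits q a r)) ` {..<q ^ L} = PiE {..<L} (\<lambda>_. UNIV)"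
    using onto by (rule digit_vector_image)
qed

lemma card_digit_vectors_in:
  fixes psi :: "nat \<Rightarrow> nat \<Rightarrow> 'f"
  assumes psi: "\<forall>r. bij_betw (psi r) {..<q} (UNIV :: 'f set)"
    and F: "F \<subseteq> PiE {..<L} (\<lambda>_. UNIV)"
  shows "card {a \<in> {..<q ^ L}. (\<lambda>r\<in>{..<L}. psi r (nat_digits q a r)) \<in> F} = card F"
proof (rule bij_betw_same_card, rule bij_betw_subset[OF bij_betw_digit_vector[OF psi]])
  let ?f = "\<lambda>a. \<lambda>r\<in>{..<L}. psi r (nat_digits q a r)"
  show "{a \<in> {..<q ^ L}. ?f a \<in> F} \<subseteq> {..<q ^ L}" by blast
  show "?f ` {a \<in> {..<q ^ L}. ?f a \<in> F} = F"
  proof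
    show "F \<subseteq> ?f ` {a \<in> {..<q ^ L}. ?f a \<in> F}"
    proof
      fix v assume v: "v \<in> F"
      then have "v \<in> ?f ` {..<q ^ L}"
        using F bij_betw_imp_surj_on[OF bij_betw_digit_vector[OF psi]] by blast
      with v show "v \<in> ?f ` {a \<in> {..<q ^ L}. ?f a \<in> F}" by auto
    qed
  qed blast
qed

lemma finite_rows_support_bound:
  fixes C :: "nat \<Rightarrow> nat \<Rightarrow> nat \<Rightarrow> 'f::zero"
  assumes "\<forall>i<s. finite_row (C i)"
  shows "\<exists>L\<ge>1. \<forall>i<s. \<forall>j<m. {r. C i (Suc j) r \<noteq> 0} \<subseteq> {..<L}"
proof -
  have "finite {r. C i (Suc j) r \<noteq> 0}" if "i < s" for i j
    using assms that by (simp add: finite_row_def)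
  then have "finite (\<Union>i<s. \<Union>j<m. {r. C i (Suc j) r \<noteq> 0})"
    by simp
  then obtain L where "(\<Union>i<s. \<Union>j<m. {r. C i (Suc j) r \<noteq> 0}) \<subseteq> {..<L}"
    using finite_nat_bounded by blast
  then have "{r. C i (Suc j) r \<noteq> 0} \<subseteq> {..<Suc L}" if "i < s" "j < m" for i j
    using that by fastforce
  then show ?thesis by (intro exI[of _ "Suc L"]) simp
qed

lemma tendsto_freq_grid_cell:
  fixes C :: "nat \<Rightarrow> nat \<Rightarrow> nat \<Rightarrow> 'f::{field,finite}" and sn :: "nat \<Rightarrow> nat \<Rightarrow> nat"
  assumes psi: "\<forall>r. bij_betw (psi r) {..<CARD('f)} (UNIV :: 'f set)"
    and lam: "\<forall>i<s. \<forall>j\<ge>1. bij_betw (lam i j) (UNIV :: 'f set) {..<CARD('f)}"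
    and digits: "\<forall>n. qadic_digits CARD('f) (sn n)" and ud: "ud_qadic CARD('f) sn"
    and L: "L \<ge> 1" and support: "\<forall>i<s. \<forall>j<m. {r. C i (Suc j) r \<noteq> 0} \<subseteq> {..<L}"
    and surj: "\<And>w. \<exists>v. \<forall>(i, j)\<in>{..<s} \<times> {..<m}. (\<Sum>r<L. C i (Suc j) r * v r) = w (i, j)"
    and P: "P \<in> PiE {..<s} (\<lambda>_. {..<CARD('f) ^ m})"
  shows "(\<lambda>N. freq (\<lambda>n. \<forall>i<s. grid_cell C psi lam m (sn n) i = P i) N)
    \<longlonglongrightarrow> 1 / real (CARD('f) ^ m) ^ s"
proof -
  let ?q = "CARD('f)" and ?K = "{..<s} \<times> {..<m}"
  obtain w where w: "\<And>i. i < s \<Longrightarrow> leading_digits ?q m (\<lambda>j. lam i (Suc j) (w (i, j))) = P i"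
    using ex_row_values_for_cells[OF lam P] by blast
  define F where "F = {v \<in> PiE {..<L} (\<lambda>_. UNIV).
    \<forall>(i, j)\<in>?K. (\<Sum>r<L. C i (Suc j) r * v r) = w (i, j)}"
  define G where "G = {a \<in> {..<?q ^ L}. (\<lambda>r\<in>{..<L}. psi r (nat_digits ?q a r)) \<in> F}"
  have event: "(\<forall>i<s. grid_cell C psi lam m (sn n) i = P i) \<longleftrightarrow> tau ?q L (sn n) \<in> G" for n
  proof -
    have sn_less: "sn n r < ?q" for r using digits by (simp add: qadic_digits_def)
    then have "nat_digits ?q (tau ?q L (sn n)) r = sn n r" if "r < L" for r
      using that by (intro nat_digits_tau) auto
    moreover have "tau ?q L (sn n) < ?q ^ L" using sn_less by (rule tau_less)
    ultimately show ?thesis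
      using grid_cells_eq_iff_row_values[OF lam support w] by (simp add: G_def F_def)
  qed
  have "card G = card F"
    unfolding G_def by (rule card_digit_vectors_in[OF psi]) (auto simp: F_def)
  moreover have "card F * ?q ^ (s * m) = ?q ^ L"
    using card_linear_fibre[where K = ?K and L = L and M = "\<lambda>(i, j) r. C i (Suc j) r" and w = w] surj
    by (simp add: F_def case_prod_beta)
  ultimately have "real (card G) * real ?q ^ (m * s) = real ?q ^ L"
    by (metis mult.commute of_nat_mult of_nat_power)
  then have "real (card G) / real ?q ^ L = 1 / real (?q ^ m) ^ s"
    by (simp add: field_simps power_mult)
  moreover have "(\<lambda>N. freq (\<lambda>n. tau ?q L (sn n) \<in> G) N) \<longlonglongrightarrow> real (card G) / real ?q ^ L"
    using ud L digits by (intro tendsto_freq_tau_mem) (auto simp: G_def)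
  ultimately show ?thesis by (simp add: event)
qed

theorem theorem1:
  fixes s :: nat
    and C :: "nat \<Rightarrow> nat \<Rightarrow> nat \<Rightarrow> 'f::{field,finite}"
    and sn :: "nat \<Rightarrow> nat \<Rightarrow> nat"
  assumes "s \<ge> 1"
    and "\<forall>i<s. finite_row (C i)"
    and "\<forall>n. qadic_digits CARD('f) (sn n)"
    and "ud_qadic CARD('f) sn"
    and "\<exists>psi1 lam1.
           (\<forall>r. bij_betw (psi1 r) {..<CARD('f)} (UNIV :: 'f set))
         \<and> (\<exists>R. \<forall>r\<ge>R. psi1 r 0 = 0)
         \<and> (\<forall>i<s. \<forall>j\<ge>1. bij_betw (lam1 i j) (UNIV :: 'f set) {..<CARD('f)})
         \<and> ud_cube s (\<lambda>n i. gen_coord C psi1 lam1 (nat_digits CARD('f) n) i)"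
  shows "\<forall>psi lam.
           (\<forall>r. bij_betw (psi r) {..<CARD('f)} (UNIV :: 'f set))
         \<and> (\<forall>i<s. \<forall>j\<ge>1. bij_betw (lam i j) (UNIV :: 'f set) {..<CARD('f)})
         \<longrightarrow> ud_cube s (\<lambda>n i. gen_coord C psi lam (sn n) i)"
proof (intro allI impI, elim conjE)
  fix psi :: "nat \<Rightarrow> nat \<Rightarrow> 'f" and lam :: "nat \<Rightarrow> nat \<Rightarrow> 'f \<Rightarrow> nat"
  assume psi: "\<forall>r. bij_betw (psi r) {..<CARD('f)} (UNIV :: 'f set)"
    and lam: "\<forall>i<s. \<forall>j\<ge>1. bij_betw (lam i j) (UNIV :: 'f set) {..<CARD('f)}"
  obtain psi1 lam1 where lam1: "\<forall>i<s. \<forall>j\<ge>1. bij_betw (lam1 i j) (UNIV :: 'f set) {..<CARD('f)}"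
    and ud1: "ud_cube s (\<lambda>n i. gen_coord C psi1 lam1 (nat_digits CARD('f) n) i)"
    using assms(5) by blast
  show "ud_cube s (\<lambda>n i. gen_coord C psi lam (sn n) i)"
  proof (rule ud_cube_if_grid_cells_equidistributed[where cell = "\<lambda>m n. grid_cell C psi lam m (sn n)"])
    show "CARD('f) \<ge> 2" by (rule card_field_ge_2)
    show "real (grid_cell C psi lam m (sn n) i) / real CARD('f) ^ m \<le> gen_coord C psi lam (sn n) i
      \<and> gen_coord C psi lam (sn n) i \<le> (real (grid_cell C psi lam m (sn n) i) + 1) / real CARD('f) ^ m"
      if "i < s" for m n i
      using lam that by (intro gen_coord_in_grid_cell) simp
  next
    fix m and P :: "nat \<Rightarrow> nat"
    assume P: "P \<in> PiE {..<s} (\<lambda>_. {..<CARD('f) ^ m})"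
    obtain L where L: "L \<ge> 1" and support: "\<forall>i<s. \<forall>j<m. {r. C i (Suc j) r \<noteq> 0} \<subseteq> {..<L}"
      using finite_rows_support_bound[OF assms(2)] by blast
    show "(\<lambda>N. freq (\<lambda>n. \<forall>i<s. grid_cell C psi lam m (sn n) i = P i) N) \<longlonglongrightarrow> 1 / real (CARD('f) ^ m) ^ s"
      using rows_surj_if_ud_cube[OF lam1 ud1 support]
      by (rule tendsto_freq_grid_cell[OF psi lam assms(3,4) L support _ P])
  qed
qed

end
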